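(* Let $q$ be a power of $2$ and let $\mathcal{C}$ be the Hermitian-Lifted Code (defined in the context). Then the minimum Hamming distance $d$ of $\mathcal{C}$ satisfies $q^2 \leq d \leq q^3 - q^2 + 1$.
   Context: Let $\mathcal{X} = \{(x,y) \in (\mathbb{F}_{q^2})^2 : x^q + x = y^{q+1}\}$ (affine $\mathbb{F}_{q^2}$-points of the Hermitian curve, $|\mathcal{X}|=q^3$). For $\alpha,\beta\in\mathbb{F}_{q^2}$ let $L_{\alpha,\beta}(t) = (\alpha t+\beta,t)$ and $\mathcal{L}=\{L_{\alpha,\beta}\}$. Let $\mathcal{F}$ be the set of $f \in \mathbb{F}_{q^2}[x,y]$ such that for every $L \in \mathcal{L}$ there exists $g \in \mathbb{F}_{q^2}[t]$ with $\deg g \le q-1$ and $f(L(t)) = g(t)$ for all $t\in\mathbb{F}_{q^2}$ with $L(t)\in\mathcal{X}$. The Hermitian-Lifted Code is $\mathcal{C} = \{(f(P))_{P\in\mathcal{X}} : f\in\mathcal{F}\}$. *)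

theory Defs
  imports "HOL-Computational_Algebra.Polynomial"
begin

text \<open>Affine points of the Hermitian curve x^q + x = y^(q+1) over the field 'a
  (intended: 'a = F_{q^2}).\<close>
definition herm_pts :: "nat \<Rightarrow> ('a::field \<times> 'a) set" where
  "herm_pts q = {(x, y). x ^ q + x = y ^ (q + 1)}"

text \<open>Bivariate polynomials over 'a, represented by finitely supported coefficient
  functions a (i,j) = coefficient of x^i y^j; evaluation:\<close>
definition eval2 :: "(nat \<times> nat \<Rightarrow> 'a::field) \<Rightarrow> 'a \<times> 'a \<Rightarrow> 'a" where
  "eval2 a P = (\<Sum>(i, j)\<in>{p. a p \<noteq> 0}. a (i, j) * fst P ^ i * snd P ^ j)"

definition lifted_polys :: "nat \<Rightarrow> (nat \<times> nat \<Rightarrow> 'a::field) set" where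
  "lifted_polys q = {a. finite {p. a p \<noteq> 0} \<and>
     (\<forall>\<alpha> \<beta>. \<exists>g :: 'a poly. degree g \<le> q - 1 \<and>
        (\<forall>t. (\<alpha> * t + \<beta>, t) \<in> herm_pts q \<longrightarrow> eval2 a (\<alpha> * t + \<beta>, t) = poly g t))}"

text \<open>Hermitian-lifted code: codewords are evaluation vectors indexed by the curve
  points, represented as functions that vanish outside the curve.\<close>
definition herm_lifted_code :: "nat \<Rightarrow> ('a::field \<times> 'a \<Rightarrow> 'a) set" where
  "herm_lifted_code q =
     {(\<lambda>P. if P \<in> herm_pts q then eval2 a P else 0) | a. a \<in> lifted_polys q}"

definition min_dist :: "('i \<Rightarrow> 'a) set \<Rightarrow> 'i set \<Rightarrow> nat" where
  "min_dist C S = Min {card {P \<in> S. u P \<noteq> v P} | u v. u \<in> C \<and> v \<in> C \<and> u \<noteq> v}"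

end

theory Submission
  imports Defs
begin

text \<open>In characteristic 2 the map \<open>x \<mapsto> x\<^sup>q\<close> is an additive involution of the field of order
  \<open>q\<^sup>2\<close>, the trace
  \<open>c \<mapsto> c\<^sup>q + c\<close> maps onto \<open>\<bbbF>\<^sub>q\<close> with fibres of size \<open>q\<close>, and there are at least \<open>q + 1\<close>
  elements with \<open>z\<^sup>q\<^sup>+\<^sup>1 = 1\<close>.

  Lower bound: if two codewords differ at \<open>P\<^sub>0 = (x\<^sub>0, y\<^sub>0)\<close>, each of the \<open>q\<^sup>2 - 1\<close> lines through
  \<open>P\<^sub>0\<close> of slope \<open>\<alpha> \<noteq> y\<^sub>0\<^sup>q\<close> meets the curve in at least \<open>q + 1\<close> points (parametrised by the
  \<open>(q+1)\<close>-st roots of unity). On such a line the difference of the codewords is a polynomial of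
  degree at most \<open>q - 1\<close> that does not vanish at \<open>y\<^sub>0\<close>, so the codewords also differ at some
  other point of the line. These lines meet only in \<open>P\<^sub>0\<close>, which gives \<open>q\<^sup>2\<close> points.

  Upper bound: for \<open>q - 1\<close> elements \<open>c\<close> with \<open>c\<^sup>q + c = 1\<close>, the polynomial \<open>\<Prod>(x - c)\<close> depends
  on \<open>x\<close> only and has degree \<open>q - 1\<close>, so it lies in the lifted family. It vanishes on the
  \<open>(q - 1)(q + 1)\<close> curve points \<open>(c, z)\<close> with \<open>z\<^sup>q\<^sup>+\<^sup>1 = 1\<close> but not at \<open>(0, 0)\<close>, and the curve has at
  most \<open>q\<^sup>3\<close> points.\<close>

lemma card_le_mult_card_image:
  assumes "finite A" and "\<And>a. a \<in> A \<Longrightarrow> card {x \<in> A. f x = f a} \<le> k"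
  shows "card A \<le> k * card (f ` A)"
proof -
  have "A = (\<Union>b\<in>f ` A. {x \<in> A. f x = b})" by auto
  then have "card A \<le> (\<Sum>b\<in>f ` A. card {x \<in> A. f x = b})"
    using card_UN_le[of "f ` A" "\<lambda>b. {x \<in> A. f x = b}"] assms(1) by simp
  also have "\<dots> \<le> card (f ` A) * k"
    using sum_bounded_above[of "f ` A" "\<lambda>b. card {x \<in> A. f x = b}" k] assms(2) by auto
  finally show ?thesis
    by (simp add: mult.commute)
qed

lemma finite_field_power_card:
  fixes x :: "'a::{finite,field}"
  shows "x ^ card (UNIV :: 'a set) = x"
proof (cases "x = 0")
  case False
  have "x * (\<Prod>y\<in>UNIV-{0}. x * y) = x * x ^ (card (UNIV :: 'a set) - 1) * \<Prod>(UNIV-{0})"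
    by (simp add: prod.distrib mult_ac)
  also have "x * x ^ (card (UNIV :: 'a set) - 1) = x ^ card (UNIV :: 'a set)"
    using finite_UNIV_card_ge_0[where ?'a = 'a] by (simp add: power_Suc[symmetric])
  also have "(\<Prod>y\<in>UNIV-{0}. x * y) = (\<Prod>y\<in>UNIV-{0}. y)"
    by (rule prod.reindex_bij_witness[of _ "\<lambda>y. y / x" "\<lambda>y. x * y"]) (use False in auto)
  finally show ?thesis
    by simp
qed (use finite_UNIV_card_ge_0[where ?'a = 'a] in auto)

lemma finite_field_even_card_two_eq_zero:
  assumes "even (card (UNIV :: 'a::{finite,field} set))"
  shows "(2::'a) = 0"
proof -
  have "(-1::'a) = (-1) ^ card (UNIV :: 'a set)"
    by (rule finite_field_power_card[symmetric])
  also have "\<dots> = 1"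
    using assms by simp
  finally have "(1::'a) + 1 = 0"
    by (metis add.right_inverse)
  then show ?thesis
    by simp
qed

lemma add_power_two_power:
  fixes a b :: "'a::comm_ring_1"
  assumes "(2::'a) = 0"
  shows "(a + b) ^ (2 ^ k) = a ^ (2 ^ k) + b ^ (2 ^ k)"
proof (induction k)
  case (Suc k)
  have "(a + b) ^ (2 ^ Suc k) = ((a + b) ^ (2 ^ k))\<^sup>2"
    by (simp add: power_mult[symmetric] mult.commute)
  also have "\<dots> = (a ^ (2 ^ k))\<^sup>2 + (b ^ (2 ^ k))\<^sup>2"
    using Suc assms by (simp add: power2_sum)
  also have "\<dots> = a ^ (2 ^ Suc k) + b ^ (2 ^ Suc k)"
    by (simp add: power_mult[symmetric] mult.commute)
  finally show ?case .
qed simp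

lemma card_power_fixed_points_le:
  assumes "2 \<le> n"
  shows "card {a::'a::field. a ^ n = a} \<le> n"
proof -
  let ?p = "monom (1::'a) n - [:0, 1:]"
  have "coeff ?p n = 1"
    using assms by (simp add: coeff_pCons split: nat.split)
  then have "?p \<noteq> 0"
    by (metis coeff_0 zero_neq_one)
  moreover have "degree ?p \<le> n"
    using degree_diff_le_max[of "monom (1::'a) n" "[:0, 1:]"] assms by (simp add: degree_monom_eq)
  moreover have "{x. poly ?p x = 0} = {a::'a. a ^ n = a}"
    by (auto simp: poly_monom)
  ultimately show ?thesis
    using card_poly_roots_bound[of ?p] by simp
qed

lemma min_dist_bounds:
  assumes "finite S"
    and "u\<^sub>0 \<in> C" "v\<^sub>0 \<in> C" "u\<^sub>0 \<noteq> v\<^sub>0" "card {P \<in> S. u\<^sub>0 P \<noteq> v\<^sub>0 P} \<le> D"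
    and "\<And>u v. u \<in> C \<Longrightarrow> v \<in> C \<Longrightarrow> u \<noteq> v \<Longrightarrow> d \<le> card {P \<in> S. u P \<noteq> v P}"
  shows "d \<le> min_dist C S \<and> min_dist C S \<le> D"
proof -
  let ?dists = "{card {P \<in> S. u P \<noteq> v P} | u v. u \<in> C \<and> v \<in> C \<and> u \<noteq> v}"
  have "?dists \<subseteq> {..card S}"
    using assms(1) by (auto intro!: card_mono)
  then have "finite ?dists"
    by (rule finite_subset) simp
  moreover have "card {P \<in> S. u\<^sub>0 P \<noteq> v\<^sub>0 P} \<in> ?dists"
    using assms(2-4) by blast
  ultimately have "d \<le> Min ?dists" "Min ?dists \<le> D"
    using assms(5,6) by (fastforce intro!: Min.boundedI, meson Min_le order_trans)
  then show ?thesis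
    unfolding min_dist_def by simp
qed

lemma herm_lifted_code_on_line:
  assumes "u \<in> herm_lifted_code q"
  obtains g :: "'a::field poly"
  where "degree g \<le> q - 1"
    and "\<And>t. (\<alpha> * t + \<beta>, t) \<in> herm_pts q \<Longrightarrow> u (\<alpha> * t + \<beta>, t) = poly g t"
proof -
  obtain a where "a \<in> lifted_polys q" and u: "u = (\<lambda>P. if P \<in> herm_pts q then eval2 a P else 0)"
    using assms unfolding herm_lifted_code_def by blast
  then obtain g :: "'a poly" where "degree g \<le> q - 1"
    and "\<forall>t. (\<alpha> * t + \<beta>, t) \<in> herm_pts q \<longrightarrow> eval2 a (\<alpha> * t + \<beta>, t) = poly g t"
    unfolding lifted_polys_def by blast
  then show thesis
    using that u by simp
qed

lemma herm_lifted_code_vanishes_outside: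
  assumes "u \<in> herm_lifted_code q" and "P \<notin> herm_pts q"
  shows "u P = 0"
  using assms unfolding herm_lifted_code_def by auto

definition x_poly_coeffs :: "'a::zero poly \<Rightarrow> nat \<times> nat \<Rightarrow> 'a" where
  "x_poly_coeffs G = (\<lambda>(i, j). if j = 0 then coeff G i else 0)"

lemma eval2_x_poly_coeffs: "eval2 (x_poly_coeffs G) P = poly G (fst P)"
proof -
  have supp: "{p. x_poly_coeffs G p \<noteq> 0} \<subseteq> (\<lambda>i. (i, 0)) ` {..degree G}"
    by (auto simp: x_poly_coeffs_def le_degree split: if_splits)
  have "eval2 (x_poly_coeffs G) P
      = (\<Sum>(i, j)\<in>(\<lambda>i. (i, 0)) ` {..degree G}. x_poly_coeffs G (i, j) * fst P ^ i * snd P ^ j)"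
    unfolding eval2_def by (rule sum.mono_neutral_left) (use supp in auto)
  also have "\<dots> = (\<Sum>i\<le>degree G. coeff G i * fst P ^ i)"
    by (subst sum.reindex) (auto simp: inj_on_def x_poly_coeffs_def)
  finally show ?thesis
    by (simp add: poly_altdef)
qed

lemma x_poly_coeffs_lifted:
  assumes "degree G \<le> q - 1"
  shows "x_poly_coeffs G \<in> lifted_polys q"
  unfolding lifted_polys_def
proof (intro CollectI conjI allI)
  show "finite {p. x_poly_coeffs G p \<noteq> 0}"
    by (rule finite_subset[of _ "{..degree G} \<times> {0}"])
      (auto simp: x_poly_coeffs_def le_degree split: if_splits)
  fix \<alpha> \<beta> :: 'a
  have "degree (G \<circ>\<^sub>p [:\<beta>, \<alpha>:]) \<le> q - 1"
    using assms by (simp add: degree_pcompose)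
  then show "\<exists>g. degree g \<le> q - 1 \<and>
      (\<forall>t. (\<alpha> * t + \<beta>, t) \<in> herm_pts q \<longrightarrow> eval2 (x_poly_coeffs G) (\<alpha> * t + \<beta>, t) = poly g t)"
    by (auto simp: eval2_x_poly_coeffs poly_pcompose algebra_simps)
qed

lemma x_poly_in_herm_lifted_code:
  assumes "degree G \<le> q - 1"
  shows "(\<lambda>P. if P \<in> herm_pts q then poly G (fst P) else 0) \<in> herm_lifted_code q"
  using x_poly_coeffs_lifted[OF assms]
  unfolding herm_lifted_code_def by (force simp: eval2_x_poly_coeffs)

context
  fixes q m :: nat
  assumes q_eq: "q = 2 ^ m" and card_field: "card (UNIV :: 'a::{finite,field} set) = q ^ 2"
begin

lemma q_ge_2: "2 \<le> q"
proof -
  have "card {0::'a, 1} \<le> card (UNIV :: 'a set)"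
    by (rule card_mono) auto
  then have "2 \<le> q ^ 2"
    using card_field by simp
  then show ?thesis
    by (cases "q \<le> 1") (auto simp: le_Suc_eq)
qed

lemma char_two: "(2::'a) = 0"
proof (rule finite_field_even_card_two_eq_zero)
  show "even (card (UNIV :: 'a set))"
    using card_field q_eq q_ge_2 by (cases m) auto
qed

lemma add_self [simp]: "(c::'a) + c = 0"
  using char_two by (metis mult_2 mult_zero_left)

lemma add_add_self [simp]: "(c::'a) + (c + d) = d"
  by (simp flip: add.assoc)

lemma add_eq_0_iff_eq: "(a::'a) + b = 0 \<longleftrightarrow> a = b"
  by (metis add_add_self add_0_right add_self)

lemma frobenius_add [simp]: "((a::'a) + b) ^ q = a ^ q + b ^ q"
  using add_power_two_power[OF char_two] q_eq by simp

lemma frobenius_frobenius [simp]: "((a::'a) ^ q) ^ q = a"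
  using finite_field_power_card[of a] card_field by (simp flip: power_mult add: power2_eq_square)

lemma trace_fiber: "{x::'a. x ^ q + x = c ^ q + c} = (\<lambda>z. c + z) ` {a. a ^ q = a}"
proof (intro set_eqI iffI)
  fix x :: 'a
  assume "x \<in> {x. x ^ q + x = c ^ q + c}"
  then have "x ^ q + x = c ^ q + c"
    by simp
  then have "(c + x) ^ q = c + x"
    by (metis add.commute add.left_commute add_add_self frobenius_add)
  then show "x \<in> (\<lambda>z. c + z) ` {a. a ^ q = a}"
    by (intro image_eqI[of _ _ "c + x"]) simp_all
next
  fix x :: 'a
  assume "x \<in> (\<lambda>z. c + z) ` {a. a ^ q = a}"
  then obtain z where "z ^ q = z" and "x = c + z"
    by blast
  then show "x \<in> {x. x ^ q + x = c ^ q + c}"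
    by (simp add: add.assoc add.commute)
qed

lemma card_subfield: "card {a::'a. a ^ q = a} = q"
proof -
  let ?F = "{a::'a. a ^ q = a}" and ?T = "\<lambda>c::'a. c ^ q + c"
  have fiber: "card {x. ?T x = ?T c} = card ?F" for c
    by (simp add: trace_fiber card_image)
  have "q ^ 2 = card (UNIV :: 'a set)"
    using card_field by simp
  also have "\<dots> \<le> card ?F * card (range ?T)"
    by (rule card_le_mult_card_image) (simp_all add: fiber)
  also have "\<dots> \<le> card ?F * card ?F"
    by (intro mult_le_mono2 card_mono) (auto simp: add.commute)
  also have "\<dots> = card ?F ^ 2"
    by (rule power2_eq_square[symmetric])
  finally have "q \<le> card ?F"
    by (rule power2_le_imp_le) simp
  then show ?thesis
    using card_power_fixed_points_le[OF q_ge_2, where 'a = 'a] by simp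
qed

lemma card_trace_fiber: "card {x::'a. x ^ q + x = c ^ q + c} = q"
  by (simp add: trace_fiber card_image card_subfield)

lemma trace_surj: "range (\<lambda>c::'a. c ^ q + c) = {a. a ^ q = a}"
proof (rule card_subset_eq)
  show "range (\<lambda>c::'a. c ^ q + c) \<subseteq> {a. a ^ q = a}"
    by (auto simp: add.commute)
  have "q * q \<le> q * card (range (\<lambda>c::'a. c ^ q + c))"
    using card_le_mult_card_image[of UNIV "\<lambda>c::'a. c ^ q + c" q]
    by (simp add: card_trace_fiber card_field power2_eq_square)
  then show "card (range (\<lambda>c::'a. c ^ q + c)) = card {a::'a. a ^ q = a}"
    using card_subfield card_mono[OF _ \<open>range _ \<subseteq> _\<close>] q_ge_2 by (simp add: le_antisym)
qed simp

lemma card_norm_one_ge: "q + 1 \<le> card {z::'a. z ^ (q + 1) = 1}"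
proof -
  let ?U = "{z::'a. z ^ (q + 1) = 1}" and ?N = "\<lambda>y::'a. y ^ (q + 1)"
  have fiber: "card {x \<in> UNIV - {0}. ?N x = ?N y} \<le> card ?U" if "y \<in> UNIV - {0}" for y
  proof -
    have "{x \<in> UNIV - {0}. ?N x = ?N y} \<subseteq> (\<lambda>z. y * z) ` ?U"
    proof
      fix x
      assume "x \<in> {x \<in> UNIV - {0}. ?N x = ?N y}"
      then have "(x / y) ^ (q + 1) = 1" and "x = y * (x / y)"
        using that by (simp_all add: power_divide)
      then show "x \<in> (\<lambda>z. y * z) ` ?U"
        by blast
    qed
    then show ?thesis
      by (meson card_image_le card_mono finite dual_order.trans)
  qed
  have "card (?N ` (UNIV - {0})) \<le> card ({a::'a. a ^ q = a} - {0})"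
    by (rule card_mono) (auto simp: power_mult_distrib mult.commute)
  also have "\<dots> = q - 1"
    using card_subfield q_ge_2 by (simp add: card_Diff_singleton power_0_left)
  finally have image: "card (?N ` (UNIV - {0})) \<le> q - 1" .
  have "(q + 1) * (q - 1) = card (UNIV - {0::'a})"
    using card_field by (simp add: card_Diff_singleton power2_eq_square algebra_simps)
  also have "\<dots> \<le> card ?U * card (?N ` (UNIV - {0}))"
    by (rule card_le_mult_card_image) (simp, rule fiber)
  also have "\<dots> \<le> card ?U * (q - 1)"
    using image by simp
  finally show ?thesis
    by (rule mult_right_le_imp_le) (use q_ge_2 in simp)
qed

lemma card_herm_pts_le: "card (herm_pts q :: ('a \<times> 'a) set) \<le> q ^ 3"
proof -
  have fiber: "card {Q \<in> herm_pts q. snd Q = snd P} \<le> q" if "P \<in> (herm_pts q :: ('a \<times> 'a) set)" for P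
  proof -
    obtain x\<^sub>0 y\<^sub>0 where P: "P = (x\<^sub>0, y\<^sub>0)"
      by (cases P)
    have "{Q \<in> herm_pts q. snd Q = snd P} \<subseteq> (\<lambda>x. (x, y\<^sub>0)) ` {x. x ^ q + x = x\<^sub>0 ^ q + x\<^sub>0}"
      using that unfolding P herm_pts_def by auto
    then have "card {Q \<in> herm_pts q. snd Q = snd P} \<le> card {x. x ^ q + x = x\<^sub>0 ^ q + x\<^sub>0}"
      by (meson card_image_le card_mono finite dual_order.trans)
    then show ?thesis
      by (simp add: card_trace_fiber)
  qed
  have "card (herm_pts q :: ('a \<times> 'a) set) \<le> q * card (snd ` (herm_pts q :: ('a \<times> 'a) set))"
    by (rule card_le_mult_card_image) (simp, rule fiber)
  also have "\<dots> \<le> q * card (UNIV :: 'a set)"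
    by (intro mult_le_mono2 card_mono) auto
  finally show ?thesis
    using card_field by (simp add: power2_eq_square power3_eq_cube)
qed

text \<open>In characteristic 2 the line \<open>x = \<alpha> t + (x\<^sub>0 + \<alpha> y\<^sub>0)\<close> passes through \<open>(x\<^sub>0, y\<^sub>0)\<close>. In the
  coordinate \<open>s = t - y\<^sub>0\<close> it meets the curve where \<open>s\<^sup>q\<^sup>+\<^sup>1 = g\<^sup>q s\<^sup>q + g s\<close> with \<open>g = y\<^sub>0\<^sup>q + \<alpha>\<close>,
  and \<open>s = g z + g\<^sup>q\<close> solves this for every \<open>z\<close> with \<open>z\<^sup>q\<^sup>+\<^sup>1 = 1\<close>.\<close>

lemma norm_one_parametrization:
  fixes g z :: 'a
  assumes "z ^ (q + 1) = 1"
  shows "(g * z + g ^ q) ^ q * (g * z + g ^ q) = g ^ q * (g * z + g ^ q) ^ q + g * (g * z + g ^ q)"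
proof -
  have zz: "z ^ q * z = 1"
    using assms by (metis Suc_eq_plus1 power_Suc2)
  have "(g * z + g ^ q) ^ q = g ^ q * z ^ q + g"
    by (simp add: power_mult_distrib)
  moreover have "(g ^ q * z ^ q + g) * (g * z + g ^ q) = g ^ q * (g ^ q * z ^ q + g) + g * (g * z + g ^ q)"
  proof -
    have "(g ^ q * z ^ q + g) * (g * z + g ^ q) = g ^ q * g * (z ^ q * z) + g ^ q * g ^ q * z ^ q + g * g * z + g * g ^ q"
      by (simp add: algebra_simps)
    also have "\<dots> = g ^ q * (g ^ q * z ^ q + g) + g * (g * z + g ^ q)"
      unfolding zz by (simp add: algebra_simps)
    finally show ?thesis .
  qed
  ultimately show ?thesis
    by simp
qed

lemma herm_pts_line_shift:
  fixes x\<^sub>0 y\<^sub>0 :: 'a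
  assumes P: "(x\<^sub>0, y\<^sub>0) \<in> herm_pts q"
    and s: "s ^ q * s = (y\<^sub>0 ^ q + \<alpha>) ^ q * s ^ q + (y\<^sub>0 ^ q + \<alpha>) * s"
  shows "(\<alpha> * (y\<^sub>0 + s) + (x\<^sub>0 + \<alpha> * y\<^sub>0), y\<^sub>0 + s) \<in> herm_pts q"
proof -
  have curve: "x\<^sub>0 ^ q + x\<^sub>0 = y\<^sub>0 ^ q * y\<^sub>0"
    using P by (simp add: herm_pts_def mult.commute)
  have x_eq: "\<alpha> * (y\<^sub>0 + s) + (x\<^sub>0 + \<alpha> * y\<^sub>0) = \<alpha> * s + x\<^sub>0"
    by (simp add: algebra_simps)
  have "(\<alpha> * s + x\<^sub>0) ^ q + (\<alpha> * s + x\<^sub>0) = (y\<^sub>0 + s) ^ (q + 1)"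
  proof -
    have "(\<alpha> * s + x\<^sub>0) ^ q + (\<alpha> * s + x\<^sub>0) = \<alpha> ^ q * s ^ q + \<alpha> * s + y\<^sub>0 ^ q * y\<^sub>0"
      using curve by (simp add: power_mult_distrib algebra_simps)
    also have "\<dots> = y\<^sub>0 ^ q * y\<^sub>0 + y\<^sub>0 ^ q * s + s ^ q * y\<^sub>0 + s ^ q * s"
      unfolding s by (simp add: algebra_simps)
    also have "\<dots> = (y\<^sub>0 + s) ^ (q + 1)"
      by (simp add: algebra_simps power_Suc2)
    finally show ?thesis .
  qed
  then show ?thesis
    unfolding herm_pts_def mem_Collect_eq case_prod_conv x_eq .
qed

lemma card_herm_line_ge:
  fixes x\<^sub>0 y\<^sub>0 :: 'a
  assumes P: "(x\<^sub>0, y\<^sub>0) \<in> herm_pts q" and \<alpha>: "\<alpha> \<noteq> y\<^sub>0 ^ q"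
  shows "q + 1 \<le> card {t. (\<alpha> * t + (x\<^sub>0 + \<alpha> * y\<^sub>0), t) \<in> herm_pts q}"
proof -
  let ?U = "{z::'a. z ^ (q + 1) = 1}"
  define g where "g = y\<^sub>0 ^ q + \<alpha>"
  define \<tau> where "\<tau> z = y\<^sub>0 + (g * z + g ^ q)" for z
  have "g \<noteq> 0"
    using \<alpha> unfolding g_def by (simp add: add_eq_0_iff_eq)
  then have "inj_on \<tau> ?U"
    by (auto simp: inj_on_def \<tau>_def)
  then have "card ?U = card (\<tau> ` ?U)"
    by (simp add: card_image)
  also have "\<dots> \<le> card {t. (\<alpha> * t + (x\<^sub>0 + \<alpha> * y\<^sub>0), t) \<in> herm_pts q}"
    using herm_pts_line_shift[OF P norm_one_parametrization]
    by (intro card_mono) (auto simp: \<tau>_def g_def)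
  finally show ?thesis
    using card_norm_one_ge by linarith
qed

lemma herm_lifted_code_diff_on_line:
  fixes x\<^sub>0 y\<^sub>0 :: 'a
  assumes u: "u \<in> herm_lifted_code q" and v: "v \<in> herm_lifted_code q"
    and P: "(x\<^sub>0, y\<^sub>0) \<in> herm_pts q" and uv: "u (x\<^sub>0, y\<^sub>0) \<noteq> v (x\<^sub>0, y\<^sub>0)"
    and \<alpha>: "\<alpha> \<noteq> y\<^sub>0 ^ q"
  obtains t where "t \<noteq> y\<^sub>0" and "(\<alpha> * t + (x\<^sub>0 + \<alpha> * y\<^sub>0), t) \<in> herm_pts q"
    and "u (\<alpha> * t + (x\<^sub>0 + \<alpha> * y\<^sub>0), t) \<noteq> v (\<alpha> * t + (x\<^sub>0 + \<alpha> * y\<^sub>0), t)"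
proof -
  let ?\<beta> = "x\<^sub>0 + \<alpha> * y\<^sub>0"
  let ?L = "{t. (\<alpha> * t + ?\<beta>, t) \<in> herm_pts q}"
  obtain g\<^sub>u :: "'a poly" where deg_u: "degree g\<^sub>u \<le> q - 1"
    and on_line_u: "\<And>t. (\<alpha> * t + ?\<beta>, t) \<in> herm_pts q \<Longrightarrow> u (\<alpha> * t + ?\<beta>, t) = poly g\<^sub>u t"
    by (rule herm_lifted_code_on_line[OF u]) blast
  obtain g\<^sub>v :: "'a poly" where deg_v: "degree g\<^sub>v \<le> q - 1"
    and on_line_v: "\<And>t. (\<alpha> * t + ?\<beta>, t) \<in> herm_pts q \<Longrightarrow> v (\<alpha> * t + ?\<beta>, t) = poly g\<^sub>v t"
    by (rule herm_lifted_code_on_line[OF v]) blast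
  note on_line = on_line_u on_line_v
  let ?R = "{t. poly (g\<^sub>u - g\<^sub>v) t = 0}"
  have "\<alpha> * y\<^sub>0 + ?\<beta> = x\<^sub>0"
    by (simp add: add.left_commute)
  then have "y\<^sub>0 \<in> ?L" and "y\<^sub>0 \<notin> ?R"
    using P uv on_line[of y\<^sub>0] by auto
  then have "g\<^sub>u - g\<^sub>v \<noteq> 0"
    by auto
  then have "card ?R \<le> q - 1"
    using card_poly_roots_bound[of "g\<^sub>u - g\<^sub>v"] degree_diff_le[OF deg_u deg_v] by linarith
  then have "card (insert y\<^sub>0 ?R) \<le> q"
    using q_ge_2 by (intro card_insert_le_m1) simp_all
  then have "card (insert y\<^sub>0 ?R) < card ?L"
    using card_herm_line_ge[OF P \<alpha>] by linarith
  then have "\<not> ?L \<subseteq> insert y\<^sub>0 ?R"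
    using card_mono[OF finite, of ?L "insert y\<^sub>0 ?R"] by linarith
  then obtain t where "t \<in> ?L" and "t \<notin> insert y\<^sub>0 ?R"
    by blast
  then show thesis
    using that on_line[of t] by auto
qed

lemma slope_eq_of_common_point:
  fixes x\<^sub>0 y\<^sub>0 t :: 'a
  assumes "\<alpha>\<^sub>1 * t + (x\<^sub>0 + \<alpha>\<^sub>1 * y\<^sub>0) = \<alpha>\<^sub>2 * t + (x\<^sub>0 + \<alpha>\<^sub>2 * y\<^sub>0)" and "t \<noteq> y\<^sub>0"
  shows "\<alpha>\<^sub>1 = \<alpha>\<^sub>2"
proof -
  have "\<alpha>\<^sub>1 * (t + y\<^sub>0) = \<alpha>\<^sub>2 * (t + y\<^sub>0)"
    using assms(1) by (simp add: distrib_left add.left_commute)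
  moreover have "t + y\<^sub>0 \<noteq> 0"
    using assms(2) by (simp add: add_eq_0_iff_eq)
  ultimately show ?thesis
    by simp
qed

lemma herm_lifted_code_dist_ge:
  assumes u: "u \<in> herm_lifted_code q" and v: "v \<in> herm_lifted_code q" and "u \<noteq> v"
  shows "q ^ 2 \<le> card {P \<in> (herm_pts q :: ('a \<times> 'a) set). u P \<noteq> v P}"
proof -
  obtain x\<^sub>0 y\<^sub>0 :: 'a where uv: "u (x\<^sub>0, y\<^sub>0) \<noteq> v (x\<^sub>0, y\<^sub>0)"
    using \<open>u \<noteq> v\<close> by fastforce
  then have P: "(x\<^sub>0, y\<^sub>0) \<in> herm_pts q"
    using herm_lifted_code_vanishes_outside[OF u] herm_lifted_code_vanishes_outside[OF v] by metis
  have "\<exists>t. t \<noteq> y\<^sub>0 \<and> (\<alpha> * t + (x\<^sub>0 + \<alpha> * y\<^sub>0), t) \<in> herm_pts q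
      \<and> u (\<alpha> * t + (x\<^sub>0 + \<alpha> * y\<^sub>0), t) \<noteq> v (\<alpha> * t + (x\<^sub>0 + \<alpha> * y\<^sub>0), t)"
    if "\<alpha> \<noteq> y\<^sub>0 ^ q" for \<alpha>
    using herm_lifted_code_diff_on_line[OF u v P uv that] by blast
  then obtain \<tau> where \<tau>: "\<And>\<alpha>. \<alpha> \<noteq> y\<^sub>0 ^ q \<Longrightarrow> \<tau> \<alpha> \<noteq> y\<^sub>0 \<and> (\<alpha> * \<tau> \<alpha> + (x\<^sub>0 + \<alpha> * y\<^sub>0), \<tau> \<alpha>) \<in> herm_pts q
      \<and> u (\<alpha> * \<tau> \<alpha> + (x\<^sub>0 + \<alpha> * y\<^sub>0), \<tau> \<alpha>) \<noteq> v (\<alpha> * \<tau> \<alpha> + (x\<^sub>0 + \<alpha> * y\<^sub>0), \<tau> \<alpha>)"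
    by metis
  define \<phi> where "\<phi> \<alpha> = (\<alpha> * \<tau> \<alpha> + (x\<^sub>0 + \<alpha> * y\<^sub>0), \<tau> \<alpha>)" for \<alpha>
  have "inj_on \<phi> (UNIV - {y\<^sub>0 ^ q})"
  proof (rule inj_onI)
    fix \<alpha>\<^sub>1 \<alpha>\<^sub>2
    assume "\<alpha>\<^sub>1 \<in> UNIV - {y\<^sub>0 ^ q}" and "\<phi> \<alpha>\<^sub>1 = \<phi> \<alpha>\<^sub>2"
    then show "\<alpha>\<^sub>1 = \<alpha>\<^sub>2"
      using \<tau> by (auto simp: \<phi>_def intro: slope_eq_of_common_point)
  qed
  moreover have "(x\<^sub>0, y\<^sub>0) \<notin> \<phi> ` (UNIV - {y\<^sub>0 ^ q})"
    using \<tau> by (auto simp: \<phi>_def)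
  ultimately have "card (insert (x\<^sub>0, y\<^sub>0) (\<phi> ` (UNIV - {y\<^sub>0 ^ q}))) = Suc (card (UNIV - {y\<^sub>0 ^ q}))"
    by (simp add: card_image)
  also have "\<dots> = q ^ 2"
    using card_field q_ge_2 by (simp add: card_Diff_singleton)
  finally have "q ^ 2 = card (insert (x\<^sub>0, y\<^sub>0) (\<phi> ` (UNIV - {y\<^sub>0 ^ q})))"
    by simp
  also have "\<dots> \<le> card {P \<in> herm_pts q. u P \<noteq> v P}"
    using \<tau> P uv by (intro card_mono) (auto simp: \<phi>_def)
  finally show ?thesis .
qed

lemma obtain_trace_one_vanishing_poly:
  obtains C :: "'a set" and G :: "'a poly"
  where "C \<subseteq> {c. c ^ q + c = 1}" and "card C = q - 1" and "degree G \<le> q - 1"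
    and "\<And>x. poly G x = 0 \<longleftrightarrow> x \<in> C"
proof -
  obtain c\<^sub>0 :: 'a where "c\<^sub>0 ^ q + c\<^sub>0 = 1"
    using trace_surj by (metis (mono_tags, lifting) mem_Collect_eq power_one rangeE)
  then have "card {c::'a. c ^ q + c = 1} = q"
    using card_trace_fiber[of c\<^sub>0] by simp
  then obtain C where C: "C \<subseteq> {c::'a. c ^ q + c = 1}" "card C = q - 1"
    by (metis obtain_subset_with_card_n diff_le_self)
  define G where "G = (\<Prod>c\<in>C. [:- c, 1:])"
  have "degree G \<le> q - 1"
    using degree_prod_sum_le[of C "\<lambda>c. [:- c, 1:]"] C(2) by (simp add: G_def)
  moreover have "poly G x = 0 \<longleftrightarrow> x \<in> C" for x
    by (simp add: G_def poly_prod)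
  ultimately show thesis
    using that C by blast
qed

lemma card_herm_pts_nonroots_le:
  assumes C: "C \<subseteq> {c. c ^ q + c = 1}" "card C = q - 1"
    and roots: "\<And>x. poly G x = 0 \<longleftrightarrow> x \<in> C"
  shows "card {P \<in> (herm_pts q :: ('a \<times> 'a) set). poly G (fst P) \<noteq> 0} \<le> q ^ 3 - q ^ 2 + 1"
proof -
  let ?X = "herm_pts q :: ('a \<times> 'a) set" and ?U = "{z::'a. z ^ (q + 1) = 1}"
  have "C \<times> ?U \<subseteq> ?X"
    using C(1) unfolding herm_pts_def by force
  have "{P \<in> ?X. poly G (fst P) \<noteq> 0} \<subseteq> ?X - C \<times> ?U"
  proof
    fix P
    assume "P \<in> {P \<in> ?X. poly G (fst P) \<noteq> 0}"
    then show "P \<in> ?X - C \<times> ?U"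
      using roots[of "fst P"] by auto
  qed
  then have "card {P \<in> ?X. poly G (fst P) \<noteq> 0} \<le> card (?X - C \<times> ?U)"
    by (rule card_mono[OF finite])
  also have "\<dots> = card ?X - (q - 1) * card ?U"
    using \<open>C \<times> ?U \<subseteq> ?X\<close> C(2) by (simp add: card_Diff_subset card_cartesian_product)
  also have "\<dots> \<le> q ^ 3 - (q - 1) * (q + 1)"
    using card_herm_pts_le mult_le_mono2[OF card_norm_one_ge, of "q - 1"] by linarith
  finally show ?thesis
    using q_ge_2 by (simp add: power2_eq_square power3_eq_cube algebra_simps)
qed

lemma herm_lifted_code_dist_le:
  obtains u v :: "'a \<times> 'a \<Rightarrow> 'a"
  where "u \<in> herm_lifted_code q" and "v \<in> herm_lifted_code q" and "u \<noteq> v"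
    and "card {P \<in> herm_pts q. u P \<noteq> v P} \<le> q ^ 3 - q ^ 2 + 1"
proof -
  obtain C and G :: "'a poly" where C: "C \<subseteq> {c. c ^ q + c = 1}" "card C = q - 1"
    and deg: "degree G \<le> q - 1" and roots: "\<And>x. poly G x = 0 \<longleftrightarrow> x \<in> C"
    by (rule obtain_trace_one_vanishing_poly) blast
  define u where "u P = (if P \<in> herm_pts q then poly G (fst P) else 0)" for P
  define v where "v P = (if P \<in> herm_pts q then poly 0 (fst P) else 0)" for P :: "'a \<times> 'a"
  have "u \<in> herm_lifted_code q" and "v \<in> herm_lifted_code q"
    unfolding u_def v_def using deg by (simp_all add: x_poly_in_herm_lifted_code)
  moreover have "u \<noteq> v"
  proof -
    have "(0::'a) ^ q + 0 \<noteq> 1"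
      using q_ge_2 by (simp add: zero_power)
    then have "poly G 0 \<noteq> 0"
      using C(1) roots[of 0] by blast
    then have "u (0, 0) \<noteq> v (0, 0)"
      using q_ge_2 by (simp add: u_def v_def herm_pts_def zero_power)
    then show ?thesis
      by auto
  qed
  moreover have "card {P \<in> herm_pts q. u P \<noteq> v P} \<le> q ^ 3 - q ^ 2 + 1"
  proof -
    have "{P \<in> herm_pts q. u P \<noteq> v P} = {P \<in> herm_pts q. poly G (fst P) \<noteq> 0}"
      by (auto simp: u_def v_def)
    then show ?thesis
      using card_herm_pts_nonroots_le[OF C roots] by simp
  qed
  ultimately show thesis
    by (rule that)
qed

end

theorem mainTheorem8:
  fixes q m :: nat
  assumes "q = 2 ^ m"
    and "card (UNIV :: 'a::{finite,field} set) = q ^ 2"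
  shows "q ^ 2 \<le> min_dist (herm_lifted_code q :: ('a \<times> 'a \<Rightarrow> 'a) set) (herm_pts q)
       \<and> min_dist (herm_lifted_code q :: ('a \<times> 'a \<Rightarrow> 'a) set) (herm_pts q) \<le> q ^ 3 - q ^ 2 + 1"
proof -
  obtain u v :: "'a \<times> 'a \<Rightarrow> 'a" where "u \<in> herm_lifted_code q" and "v \<in> herm_lifted_code q" and "u \<noteq> v"
    and "card {P \<in> herm_pts q. u P \<noteq> v P} \<le> q ^ 3 - q ^ 2 + 1"
    by (rule herm_lifted_code_dist_le[OF assms])
  from finite this herm_lifted_code_dist_ge[OF assms] show ?thesis
    by (rule min_dist_bounds)
qed

end
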